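(* The space $L_\infty[0,1]$ fails the UALS property.
   Context: A Banach space $X$ satisfies the UALS property if there exists $C>0$ such that for every convex norm-compact $W\subset\mathcal{L}(X)$, every $A\in\mathcal{L}(X)$ and $\varepsilon>0$ such that for every $x$ in the unit ball of $X$ there is $B\in W$ with $\|A(x)-B(x)\|\le\varepsilon$, there exist a closed finite-codimensional subspace $Y$ of $X$ and $B\in W$ with $\|(A-B)|_Y\|_{\mathcal{L}(Y,X)}\le C\varepsilon$. *)

theory Defs
  imports "HOL-Probability.Probability"
begin

section \<open>The space L_infinity[0,1]\<close>

abbreviation M01 :: "real measure" where
  "M01 \<equiv> lebesgue_on {0..1::real}"

definition Linf_fun :: "(real \<Rightarrow> real) set" where
  "Linf_fun = {f. f \<in> borel_measurable M01 \<and> (\<exists>C. AE x in M01. \<bar>f x\<bar> \<le> C)}"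

definition Linf_rel :: "(real \<Rightarrow> real) \<Rightarrow> (real \<Rightarrow> real) \<Rightarrow> bool" where
  "Linf_rel f g \<longleftrightarrow> f \<in> Linf_fun \<and> g \<in> Linf_fun \<and> (AE x in M01. f x = g x)"

lemma zero_Linf_fun: "(\<lambda>x. 0) \<in> Linf_fun"
  unfolding Linf_fun_def by auto

lemma add_Linf_fun: "f \<in> Linf_fun \<Longrightarrow> g \<in> Linf_fun \<Longrightarrow> (\<lambda>x. f x + g x) \<in> Linf_fun"
  unfolding Linf_fun_def
proof (safe, goal_cases)
  case (1 C D)
  then show ?case by auto
next
  case (2 C D)
  then show ?case by (intro exI[of _ "C + D"]) (auto elim!: eventually_elim2)
qed

lemma scale_Linf_fun: "f \<in> Linf_fun \<Longrightarrow> (\<lambda>x. c * f x) \<in> Linf_fun"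
  unfolding Linf_fun_def
proof (safe, goal_cases)
  case (1 C)
  then show ?case by auto
next
  case (2 C)
  then show ?case
    by (intro exI[of _ "\<bar>c\<bar> * C"]) (auto simp: abs_mult intro: mult_left_mono elim!: eventually_mono)
qed

lemma uminus_Linf_fun: "f \<in> Linf_fun \<Longrightarrow> (\<lambda>x. - f x) \<in> Linf_fun"
  using scale_Linf_fun[of f "-1"] by simp

lemma diff_Linf_fun: "f \<in> Linf_fun \<Longrightarrow> g \<in> Linf_fun \<Longrightarrow> (\<lambda>x. f x - g x) \<in> Linf_fun"
  using add_Linf_fun[OF _ uminus_Linf_fun, of f g] by simp

lemma part_equivp_Linf_rel: "part_equivp Linf_rel"
proof (rule part_equivpI)
  show "\<exists>x. Linf_rel x x" using zero_Linf_fun by (auto simp: Linf_rel_def)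
  show "symp Linf_rel" unfolding symp_def Linf_rel_def by (auto elim!: eventually_mono)
  show "transp Linf_rel" unfolding transp_def Linf_rel_def by (auto elim!: eventually_elim2)
qed

quotient_type Linf01 = "real \<Rightarrow> real" / partial: Linf_rel
  by (rule part_equivp_Linf_rel)

definition Linf_norm :: "(real \<Rightarrow> real) \<Rightarrow> real" where
  "Linf_norm f = real_of_ereal (esssup M01 (\<lambda>x. ereal \<bar>f x\<bar>))"

lemma M01_space_measure: "emeasure M01 (space M01) = 1"
  by (simp add: emeasure_restrict_space)

lemma AE_M01_nontriv: "\<not> (AE x in M01. False)"
  using M01_space_measure by (simp add: eventually_False ae_filter_eq_bot_iff)

lemma esssup_Linf_bounds:
  assumes "f \<in> Linf_fun"
  shows "esssup M01 (\<lambda>x. ereal \<bar>f x\<bar>) \<noteq> \<infinity>"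
    and "esssup M01 (\<lambda>x. ereal \<bar>f x\<bar>) \<ge> 0"
    and "AE x in M01. \<bar>f x\<bar> \<le> Linf_norm f"
proof -
  from assms obtain C where f: "f \<in> borel_measurable M01" and C: "AE x in M01. \<bar>f x\<bar> \<le> C"
    unfolding Linf_fun_def by auto
  have m: "(\<lambda>x. ereal \<bar>f x\<bar>) \<in> borel_measurable M01" using f by measurable
  have "esssup M01 (\<lambda>x. ereal \<bar>f x\<bar>) \<le> ereal C"
    by (rule esssup_I[OF m]) (use C in \<open>auto elim!: eventually_mono\<close>)
  then show 1: "esssup M01 (\<lambda>x. ereal \<bar>f x\<bar>) \<noteq> \<infinity>" by auto
  have A: "AE x in M01. ereal \<bar>f x\<bar> \<le> esssup M01 (\<lambda>x. ereal \<bar>f x\<bar>)" by (rule esssup_AE)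
  show 2: "esssup M01 (\<lambda>x. ereal \<bar>f x\<bar>) \<ge> 0"
  proof (rule ccontr)
    assume neg: "\<not> ?thesis"
    have "AE x in M01. False" using A
    proof eventually_elim
      case (elim x)
      have "0 \<le> ereal \<bar>f x\<bar>" by simp
      then show False using elim neg order_trans by blast
    qed
    then show False using AE_M01_nontriv by simp
  qed
  define e where "e = esssup M01 (\<lambda>x. ereal \<bar>f x\<bar>)"
  have fin: "ereal (real_of_ereal e) = e" using 1 2 unfolding e_def by (intro ereal_real') auto
  show "AE x in M01. \<bar>f x\<bar> \<le> Linf_norm f"
    using A unfolding Linf_norm_def e_def[symmetric]
  proof eventually_elim
    case (elim x)
    then have "ereal \<bar>f x\<bar> \<le> ereal (real_of_ereal e)" using fin by simp
    then show ?case by simp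
  qed
qed

lemma Linf_norm_nonneg: "f \<in> Linf_fun \<Longrightarrow> Linf_norm f \<ge> 0"
  using esssup_Linf_bounds(2)[of f] unfolding Linf_norm_def by (simp add: real_of_ereal_pos)

lemma Linf_norm_le:
  assumes f: "f \<in> Linf_fun" and c: "AE x in M01. \<bar>f x\<bar> \<le> c"
  shows "Linf_norm f \<le> c"
proof -
  have m: "(\<lambda>x. ereal \<bar>f x\<bar>) \<in> borel_measurable M01" using f unfolding Linf_fun_def by auto
  have "esssup M01 (\<lambda>x. ereal \<bar>f x\<bar>) \<le> ereal c"
    by (rule esssup_I[OF m]) (use c in \<open>auto elim!: eventually_mono\<close>)
  moreover have "esssup M01 (\<lambda>x. ereal \<bar>f x\<bar>) \<ge> 0" by (rule esssup_Linf_bounds(2)[OF f])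
  ultimately show ?thesis unfolding Linf_norm_def
    by (cases "esssup M01 (\<lambda>x. ereal \<bar>f x\<bar>)") auto
qed

lemma Linf_fun_ereal_meas: "f \<in> Linf_fun \<Longrightarrow> (\<lambda>x. ereal \<bar>f x\<bar>) \<in> borel_measurable M01"
  unfolding Linf_fun_def by auto

lemma Linf_norm_cong: "Linf_rel f g \<Longrightarrow> Linf_norm f = Linf_norm g"
  unfolding Linf_norm_def Linf_rel_def
  by (auto intro!: arg_cong[where f=real_of_ereal] esssup_AE_cong Linf_fun_ereal_meas elim!: eventually_mono)

lemma Linf_norm_triangle:
  assumes f: "f \<in> Linf_fun" and g: "g \<in> Linf_fun"
  shows "Linf_norm (\<lambda>x. f x + g x) \<le> Linf_norm f + Linf_norm g"
  using esssup_Linf_bounds(3)[OF f] esssup_Linf_bounds(3)[OF g]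
  by (intro Linf_norm_le add_Linf_fun f g) (auto elim!: eventually_elim2)

lemma Linf_norm_scale_le:
  assumes f: "f \<in> Linf_fun"
  shows "Linf_norm (\<lambda>x. c * f x) \<le> \<bar>c\<bar> * Linf_norm f"
  using esssup_Linf_bounds(3)[OF f]
  by (intro Linf_norm_le scale_Linf_fun f)
     (auto simp: abs_mult intro: mult_left_mono elim!: eventually_mono)

lemma Linf_norm_scale:
  assumes f: "f \<in> Linf_fun"
  shows "Linf_norm (\<lambda>x. c * f x) = \<bar>c\<bar> * Linf_norm f"
proof (cases "c = 0")
  case True
  then show ?thesis using Linf_norm_scale_le[OF f, of 0] Linf_norm_nonneg[OF zero_Linf_fun] by simp
next
  case False
  have "Linf_norm f = Linf_norm (\<lambda>x. (1/c) * (c * f x))" using False by simp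
  also have "\<dots> \<le> \<bar>1/c\<bar> * Linf_norm (\<lambda>x. c * f x)"
    by (rule Linf_norm_scale_le[OF scale_Linf_fun[OF f]])
  finally have "\<bar>c\<bar> * Linf_norm f \<le> Linf_norm (\<lambda>x. c * f x)"
    using False by (simp add: field_simps)
  then show ?thesis using Linf_norm_scale_le[OF f, of c] by simp
qed

lemma Linf_norm_zero_iff:
  assumes f: "f \<in> Linf_fun"
  shows "Linf_norm f = 0 \<longleftrightarrow> (AE x in M01. f x = 0)"
proof
  assume "Linf_norm f = 0"
  then show "AE x in M01. f x = 0" using esssup_Linf_bounds(3)[OF f] by (auto elim!: eventually_mono)
next
  assume "AE x in M01. f x = 0"
  then have "Linf_norm f \<le> 0" by (intro Linf_norm_le f) (auto elim!: eventually_mono)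
  then show "Linf_norm f = 0" using Linf_norm_nonneg[OF f] by simp
qed

instantiation Linf01 :: real_normed_vector
begin

lift_definition zero_Linf01 :: Linf01 is "\<lambda>x. 0"
  by (simp add: Linf_rel_def zero_Linf_fun)

lift_definition plus_Linf01 :: "Linf01 \<Rightarrow> Linf01 \<Rightarrow> Linf01" is "\<lambda>f g x. f x + g x"
  by (auto simp: Linf_rel_def add_Linf_fun elim!: eventually_elim2)

lift_definition uminus_Linf01 :: "Linf01 \<Rightarrow> Linf01" is "\<lambda>f x. - f x"
  by (auto simp: Linf_rel_def uminus_Linf_fun elim!: eventually_mono)

lift_definition minus_Linf01 :: "Linf01 \<Rightarrow> Linf01 \<Rightarrow> Linf01" is "\<lambda>f g x. f x - g x"
  by (auto simp: Linf_rel_def diff_Linf_fun elim!: eventually_elim2)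

lift_definition scaleR_Linf01 :: "real \<Rightarrow> Linf01 \<Rightarrow> Linf01" is "\<lambda>c f x. c * f x"
  by (auto simp: Linf_rel_def scale_Linf_fun elim!: eventually_mono)

lift_definition norm_Linf01 :: "Linf01 \<Rightarrow> real" is Linf_norm
  by (rule Linf_norm_cong)

definition dist_Linf01 :: "Linf01 \<Rightarrow> Linf01 \<Rightarrow> real" where
  "dist_Linf01 x y = norm (x - y)"

definition sgn_Linf01 :: "Linf01 \<Rightarrow> Linf01" where
  "sgn_Linf01 x = scaleR (inverse (norm x)) x"

definition uniformity_Linf01 :: "(Linf01 \<times> Linf01) filter" where
  "uniformity_Linf01 = (INF e\<in>{0<..}. principal {(x, y). dist x y < e})"

definition open_Linf01 :: "Linf01 set \<Rightarrow> bool" where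
  "open_Linf01 U \<longleftrightarrow> (\<forall>x\<in>U. eventually (\<lambda>(x', y). x' = x \<longrightarrow> y \<in> U) uniformity)"

instance
proof
  fix a b c :: Linf01 and r s :: real
  show "a + b + c = a + (b + c)"
    by transfer (auto simp: Linf_rel_def add_Linf_fun)
  show "a + b = b + a"
    by transfer (auto simp: Linf_rel_def add_Linf_fun)
  show "0 + a = a"
    by transfer (auto simp: Linf_rel_def)
  show "- a + a = 0"
    by transfer (auto simp: Linf_rel_def add_Linf_fun uminus_Linf_fun zero_Linf_fun)
  show "a - b = a + - b"
    by transfer (auto simp: Linf_rel_def add_Linf_fun uminus_Linf_fun diff_Linf_fun)
  show "r *\<^sub>R (a + b) = r *\<^sub>R a + r *\<^sub>R b"
    by transfer (auto simp: Linf_rel_def add_Linf_fun scale_Linf_fun algebra_simps)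
  show "(r + s) *\<^sub>R a = r *\<^sub>R a + s *\<^sub>R a"
    by transfer (auto simp: Linf_rel_def add_Linf_fun scale_Linf_fun algebra_simps)
  show "r *\<^sub>R s *\<^sub>R a = (r * s) *\<^sub>R a"
    by transfer (auto simp: Linf_rel_def scale_Linf_fun)
  show "1 *\<^sub>R a = a"
    by transfer (auto simp: Linf_rel_def)
  show "dist a b = norm (a - b)" by (rule dist_Linf01_def)
  show "sgn a = inverse (norm a) *\<^sub>R a" by (rule sgn_Linf01_def)
  show "norm a = 0 \<longleftrightarrow> a = 0"
    by transfer (auto simp: Linf_rel_def Linf_norm_zero_iff zero_Linf_fun)
  show "norm (a + b) \<le> norm a + norm b"
    by transfer (auto simp: Linf_rel_def Linf_norm_triangle)
  show "norm (r *\<^sub>R a) = \<bar>r\<bar> * norm a"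
    by transfer (auto simp: Linf_rel_def Linf_norm_scale)
qed (simp_all add: uniformity_Linf01_def open_Linf01_def)

end

section \<open>The UALS property\<close>

definition closed_finite_codim_subspace :: "'a::real_normed_vector set \<Rightarrow> bool" where
  "closed_finite_codim_subspace Y \<longleftrightarrow>
     subspace Y \<and> closed Y \<and> (\<exists>F. finite F \<and> span (Y \<union> F) = UNIV)"

definition UALS :: "'a::real_normed_vector itself \<Rightarrow> bool" where
  "UALS _ \<longleftrightarrow>
    (\<exists>C>0. \<forall>(W :: ('a \<Rightarrow>\<^sub>L 'a) set) (A :: 'a \<Rightarrow>\<^sub>L 'a) (\<epsilon>::real).
        convex W \<and> compact W \<and> \<epsilon> > 0 \<and>
        (\<forall>x. norm x \<le> 1 \<longrightarrow> (\<exists>B\<in>W. norm (blinfun_apply A x - blinfun_apply B x) \<le> \<epsilon>))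
        \<longrightarrow> (\<exists>Y. \<exists>B\<in>W. closed_finite_codim_subspace Y \<and>
               (\<forall>y\<in>Y. norm (blinfun_apply (A - B) y) \<le> C * \<epsilon> * norm y)))"

end

(*
  Let c_p(x) be the Fourier coefficient of x in L_infinity[0,1] against cos(2 pi (p+1) s); by Bessel's
  inequality the squares of these coefficients sum to at most |x|^2/2.  For a bounded multiplier d,
  the operator x |-> d_p c_p(x) on the interval ]1/(p+1), 1/p[ is bounded with norm of the image
  equal to sup_p |d_p c_p(x)|.

  Suppose UALS holds with constant C, let K = 20 (C + 1), M >= K^2 and n = 2M.  Let A be the
  multiplier K and W the convex hull of the multipliers K M 1[p = j mod n], j < n.  For x in the
  unit ball, Bessel leaves at most M residue classes mod n that contain a coefficient |c_p(x)| > 1/K;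
  averaging the M indicators of a set of classes containing them gives B in W with |Ax - Bx| <= 1.
  On the other hand every B in W has some residue class i on which the multiplier of A - B is at
  least K/2, and every closed subspace Y of finite codimension contains, up to 1/4, a difference of
  two cosines with frequencies in that class.  Testing A - B on this element of Y gives K/2 <= 9C,
  a contradiction.
*)

theory Submission
  imports Defs
begin

section \<open>Cosine modes and Fourier coefficients\<close>

lemma has_integral_cos_int_multiple:
  fixes m :: int
  shows "((\<lambda>s. cos (2 * pi * of_int m * s)) has_integral (if m = 0 then 1 else 0)) {0..1}"
proof (cases "m = 0")
  case True
  then show ?thesis using has_integral_const_real[of "1::real" 0 1] by simp
next
  case False
  let ?F = "\<lambda>s. sin (2 * pi * of_int m * s) / (2 * pi * of_int m)"
  have "(?F has_vector_derivative cos (2 * pi * of_int m * s)) (at s within {0..1})" for s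
    using False unfolding has_real_derivative_iff_has_vector_derivative[symmetric]
    by (auto intro!: derivative_eq_intros)
  then have "((\<lambda>s. cos (2 * pi * of_int m * s)) has_integral (?F 1 - ?F 0)) {0..1}"
    by (intro fundamental_theorem_of_calculus) auto
  moreover have "?F 1 = 0" using sin_int_2pin[of m] by simp
  ultimately show ?thesis using False by simp
qed

definition cos_mode :: "nat \<Rightarrow> real \<Rightarrow> real" where
  "cos_mode p s = cos (2 * pi * real (Suc p) * s)"

lemma abs_cos_mode_le_1: "\<bar>cos_mode p s\<bar> \<le> 1"
  by (simp add: cos_mode_def)

lemma id_M01_measurable [measurable]: "(\<lambda>s::real. s) \<in> borel_measurable M01"
  using id_borel_measurable_lebesgue_on[of "{0..1::real}"] by (simp add: id_def)

lemma cos_mode_measurable [measurable]: "cos_mode p \<in> borel_measurable M01"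
  unfolding cos_mode_def by measurable

lemma has_integral_cos_mode_mult:
  "((\<lambda>s. cos_mode p s * cos_mode q s) has_integral (if p = q then 1/2 else 0)) {0..1}"
proof -
  define a b where "a = int (Suc p)" and "b = int (Suc q)"
  have eq: "cos_mode p s * cos_mode q s =
      (cos (2 * pi * of_int (a - b) * s) + cos (2 * pi * of_int (a + b) * s)) / 2" for s
  proof -
    have "cos (2 * pi * of_int (a - b) * s) = cos (2 * pi * of_int a * s - 2 * pi * of_int b * s)"
      "cos (2 * pi * of_int (a + b) * s) = cos (2 * pi * of_int a * s + 2 * pi * of_int b * s)"
      by (simp_all add: algebra_simps)
    then show ?thesis unfolding cos_mode_def a_def b_def by (simp add: cos_diff cos_add)
  qed
  have "((\<lambda>s. (cos (2 * pi * of_int (a - b) * s) + cos (2 * pi * of_int (a + b) * s)) / 2)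
      has_integral (((if a - b = 0 then 1 else 0) + (if a + b = 0 then 1 else 0)) / 2)) {0..1}"
    by (intro has_integral_divide has_integral_add has_integral_cos_int_multiple)
  then have "((\<lambda>s. cos_mode p s * cos_mode q s) has_integral
      (((if a - b = 0 then 1 else 0) + (if a + b = 0 then 1 else 0)) / 2)) {0..1}"
    by (simp only: eq)
  moreover have "a + b \<noteq> 0" "a - b = 0 \<longleftrightarrow> p = q" unfolding a_def b_def by auto
  ultimately show ?thesis by (cases "p = q") auto
qed

lemma integral_cos_mode_mult:
  "(LINT s|M01. cos_mode p s * cos_mode q s) = (if p = q then 1/2 else 0)"
proof -
  have "continuous_on {0..1} (\<lambda>s. cos_mode p s * cos_mode q s)"
    unfolding cos_mode_def by (intro continuous_intros)
  then have "(LINT s|M01. cos_mode p s * cos_mode q s) = integral {0..1} (\<lambda>s. cos_mode p s * cos_mode q s)"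
    by (intro lebesgue_integral_eq_integral continuous_imp_integrable_real) auto
  then show ?thesis using has_integral_cos_mode_mult[of p q] by (simp add: integral_unique)
qed

lemma Linf_funI: "f \<in> borel_measurable M01 \<Longrightarrow> (\<And>s. \<bar>f s\<bar> \<le> C) \<Longrightarrow> f \<in> Linf_fun"
  unfolding Linf_fun_def by auto

lemma const_Linf_fun: "(\<lambda>s. c) \<in> Linf_fun"
  by (rule Linf_funI[of _ "\<bar>c\<bar>"]) auto

lemma cos_mode_Linf_fun: "cos_mode p \<in> Linf_fun"
  by (rule Linf_funI[OF cos_mode_measurable abs_cos_mode_le_1])

lemma mult_Linf_fun:
  assumes "f \<in> Linf_fun" "g \<in> Linf_fun"
  shows "(\<lambda>s. f s * g s) \<in> Linf_fun"
proof -
  from assms obtain C D where f: "f \<in> borel_measurable M01" "AE x in M01. \<bar>f x\<bar> \<le> C"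
    and g: "g \<in> borel_measurable M01" "AE x in M01. \<bar>g x\<bar> \<le> D"
    unfolding Linf_fun_def by auto
  have "AE x in M01. \<bar>f x * g x\<bar> \<le> C * D"
    using f(2) g(2) by eventually_elim (auto simp: abs_mult intro: mult_mono)
  then show ?thesis unfolding Linf_fun_def using f(1) g(1) by auto
qed

lemma abs_Linf_fun: "f \<in> Linf_fun \<Longrightarrow> (\<lambda>s. \<bar>f s\<bar>) \<in> Linf_fun"
  unfolding Linf_fun_def by auto

lemma sum_Linf_fun: "(\<And>p. p \<in> P \<Longrightarrow> f p \<in> Linf_fun) \<Longrightarrow> (\<lambda>s. \<Sum>p\<in>P. f p s) \<in> Linf_fun"
  by (induction P rule: infinite_finite_induct) (simp_all add: const_Linf_fun add_Linf_fun)

lemma integrable_Linf_fun: "f \<in> Linf_fun \<Longrightarrow> integrable M01 f"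
  unfolding Linf_fun_def
  by (auto intro!: finite_measure.integrable_const_bound finite_measureI simp: emeasure_restrict_space)

definition fourier_coeff :: "nat \<Rightarrow> (real \<Rightarrow> real) \<Rightarrow> real" where
  "fourier_coeff p f = (LINT s|M01. f s * cos_mode p s)"

lemma integral_le_of_Linf_norm_bound:
  assumes f: "f \<in> Linf_fun" and g: "g \<in> Linf_fun"
    and le: "\<And>s. \<bar>f s\<bar> \<le> Linf_norm f \<Longrightarrow> g s \<le> b"
  shows "(LINT s|M01. g s) \<le> b"
proof -
  have "(LINT s|M01. g s) \<le> (LINT s|M01. b)"
    using esssup_Linf_bounds(3)[OF f]
    by (intro integral_mono_AE integrable_Linf_fun g const_Linf_fun) (auto elim!: eventually_mono le)
  then show ?thesis by (simp add: measure_restrict_space)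
qed

lemma abs_fourier_coeff_le:
  assumes f: "f \<in> Linf_fun"
  shows "\<bar>fourier_coeff p f\<bar> \<le> Linf_norm f"
proof -
  have "\<bar>fourier_coeff p f\<bar> \<le> (LINT s|M01. \<bar>f s * cos_mode p s\<bar>)"
    unfolding fourier_coeff_def by (rule integral_abs_bound)
  also have "\<dots> \<le> Linf_norm f"
  proof (rule integral_le_of_Linf_norm_bound[OF f])
    show "(\<lambda>s. \<bar>f s * cos_mode p s\<bar>) \<in> Linf_fun"
      by (intro abs_Linf_fun mult_Linf_fun f cos_mode_Linf_fun)
    show "\<bar>f s * cos_mode p s\<bar> \<le> Linf_norm f" if "\<bar>f s\<bar> \<le> Linf_norm f" for s
      using that abs_cos_mode_le_1[of p s] unfolding abs_mult
      by (metis abs_ge_zero mult_left_le order_trans)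
  qed
  finally show ?thesis .
qed

lemma integral_mult_cos_combination:
  assumes f: "f \<in> Linf_fun"
  shows "(LINT s|M01. f s * (\<Sum>p\<in>P. c p * cos_mode p s)) = (\<Sum>p\<in>P. c p * fourier_coeff p f)"
proof -
  have "(LINT s|M01. f s * (\<Sum>p\<in>P. c p * cos_mode p s)) = (LINT s|M01. (\<Sum>p\<in>P. c p * (f s * cos_mode p s)))"
    by (simp add: sum_distrib_left algebra_simps)
  also have "\<dots> = (\<Sum>p\<in>P. LINT s|M01. c p * (f s * cos_mode p s))"
    by (intro Bochner_Integration.integral_sum integrable_mult_right integrable_Linf_fun mult_Linf_fun
        f cos_mode_Linf_fun)
  also have "\<dots> = (\<Sum>p\<in>P. c p * fourier_coeff p f)"
    by (simp add: fourier_coeff_def)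
  finally show ?thesis .
qed

lemma fourier_coeff_cos_combination:
  assumes "finite P"
  shows "fourier_coeff q (\<lambda>s. \<Sum>p\<in>P. c p * cos_mode p s) = (if q \<in> P then c q / 2 else 0)"
proof -
  have "fourier_coeff q (\<lambda>s. \<Sum>p\<in>P. c p * cos_mode p s) = (LINT s|M01. cos_mode q s * (\<Sum>p\<in>P. c p * cos_mode p s))"
    unfolding fourier_coeff_def by (simp add: mult.commute)
  also have "\<dots> = (\<Sum>p\<in>P. c p * (if q = p then 1/2 else 0))"
    unfolding integral_mult_cos_combination[OF cos_mode_Linf_fun] fourier_coeff_def integral_cos_mode_mult ..
  also have "\<dots> = (if q \<in> P then c q / 2 else 0)"
    using assms by (simp add: if_distrib[of "(*) _"] sum.delta cong: if_cong)
  finally show ?thesis .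
qed

lemma fourier_coeff_Bessel:
  assumes f: "f \<in> Linf_fun" and P: "finite P"
  shows "(\<Sum>p\<in>P. (fourier_coeff p f)\<^sup>2) \<le> (Linf_norm f)\<^sup>2 / 2"
proof -
  define c where "c p = fourier_coeff p f" for p
  define u where "u s = (\<Sum>p\<in>P. c p * cos_mode p s)" for s
  have u: "u \<in> Linf_fun"
    unfolding u_def by (intro sum_Linf_fun scale_Linf_fun cos_mode_Linf_fun)
  have fu: "(LINT s|M01. f s * u s) = (\<Sum>p\<in>P. (c p)\<^sup>2)"
    unfolding u_def integral_mult_cos_combination[OF f] by (simp add: c_def power2_eq_square)
  have uu: "(LINT s|M01. u s * u s) = (\<Sum>p\<in>P. (c p)\<^sup>2) / 2"
    unfolding u_def integral_mult_cos_combination[OF sum_Linf_fun[OF scale_Linf_fun[OF cos_mode_Linf_fun]]]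
    unfolding fourier_coeff_cos_combination[OF P]
    by (simp add: power2_eq_square sum_divide_distrib)
  have ff: "(LINT s|M01. f s * f s) \<le> (Linf_norm f)\<^sup>2"
    by (rule integral_le_of_Linf_norm_bound[OF f mult_Linf_fun[OF f f]])
       (metis abs_le_square_iff abs_of_nonneg abs_ge_zero order_trans power2_eq_square)
  have "0 \<le> (LINT s|M01. (f s - 2 * u s)\<^sup>2)" by simp
  also have "\<dots> = (LINT s|M01. f s * f s) - 4 * (LINT s|M01. f s * u s) + 4 * (LINT s|M01. u s * u s)"
  proof -
    have "(\<lambda>s. (f s - 2 * u s)\<^sup>2) = (\<lambda>s. (f s * f s - 4 * (f s * u s)) + 4 * (u s * u s))"
      by (auto simp: power2_eq_square algebra_simps)
    then show ?thesis by (simp add: integrable_Linf_fun mult_Linf_fun f u)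
  qed
  finally show ?thesis using ff fu uu unfolding c_def by linarith
qed

lemma fourier_coeff_cong:
  assumes "Linf_rel f g"
  shows "fourier_coeff p f = fourier_coeff p g"
proof -
  have "f \<in> borel_measurable M01" "g \<in> borel_measurable M01" "AE s in M01. f s = g s"
    using assms unfolding Linf_rel_def Linf_fun_def by auto
  then show ?thesis
    unfolding fourier_coeff_def by (intro integral_cong_AE) (auto elim!: eventually_mono)
qed

lemma fourier_coeff_add:
  "f \<in> Linf_fun \<Longrightarrow> g \<in> Linf_fun \<Longrightarrow> fourier_coeff p (\<lambda>s. f s + g s) = fourier_coeff p f + fourier_coeff p g"
  unfolding fourier_coeff_def
  by (simp add: distrib_right integrable_Linf_fun mult_Linf_fun cos_mode_Linf_fun)

lemma fourier_coeff_scale: "fourier_coeff p (\<lambda>s. a * f s) = a * fourier_coeff p f"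
  unfolding fourier_coeff_def by (simp add: mult.assoc)

lift_definition fourier_coeffL :: "nat \<Rightarrow> Linf01 \<Rightarrow> real" is fourier_coeff
  by (rule fourier_coeff_cong)

lift_definition cos_modeL :: "nat \<Rightarrow> Linf01" is cos_mode
  by (simp add: Linf_rel_def cos_mode_Linf_fun)

lemma abs_fourier_coeffL_le: "\<bar>fourier_coeffL p x\<bar> \<le> norm x"
  by transfer (auto simp: Linf_rel_def abs_fourier_coeff_le)

lemma fourier_coeffL_Bessel:
  "finite P \<Longrightarrow> (\<Sum>p\<in>P. (fourier_coeffL p x)\<^sup>2) \<le> (norm x)\<^sup>2 / 2"
  by transfer (metis Linf_rel_def fourier_coeff_Bessel)

lemma linear_fourier_coeffL: "linear (fourier_coeffL p)"
proof (rule linearI)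
  show "fourier_coeffL p (x + y) = fourier_coeffL p x + fourier_coeffL p y" for x y
    by transfer (auto simp: Linf_rel_def fourier_coeff_add)
  show "fourier_coeffL p (a *\<^sub>R x) = a *\<^sub>R fourier_coeffL p x" for a x
    by transfer (simp add: fourier_coeff_scale)
qed

lemma fourier_coeffL_cos_modeL: "fourier_coeffL q (cos_modeL p) = (if p = q then 1/2 else 0)"
proof -
  have "fourier_coeffL q (cos_modeL p) = fourier_coeff q (cos_mode p)"
    by transfer simp
  then show ?thesis by (simp add: fourier_coeff_def integral_cos_mode_mult mult.commute eq_commute)
qed

lemma norm_cos_modeL_le: "norm (cos_modeL p) \<le> 1"
  by transfer (intro Linf_norm_le cos_mode_Linf_fun, simp add: abs_cos_mode_le_1)

section \<open>Block-diagonal multiplier operators\<close>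

definition block_index :: "real \<Rightarrow> nat" where
  "block_index s = nat \<lfloor>1 / s\<rfloor>"

lemma block_index_measurable [measurable]: "block_index \<in> measurable M01 (count_space UNIV)"
  unfolding block_index_def by measurable

lemma block_index_eq:
  assumes p: "1 \<le> p" and s: "s \<in> {1 / (real p + 1)<..<1 / real p}"
  shows "block_index s = p"
proof -
  have "0 < s" using s p by (auto intro: less_trans[rotated])
  then have "real p < 1 / s" "1 / s < real p + 1"
    using s p by (auto simp: field_simps)
  then have "\<lfloor>1 / s\<rfloor> = int p" by (intro floor_unique) auto
  then show ?thesis unfolding block_index_def by simp
qed

lemma not_AE_M01_notin_interval:
  assumes "0 \<le> a" "a < b" "b \<le> 1"
  shows "\<not> (AE s in M01. s \<notin> {a<..<b})"
proof
  assume ae: "AE s in M01. s \<notin> {a<..<b}"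
  have sub: "{a<..<b} \<subseteq> {0..1::real}" using assms by auto
  have "{a<..<b} \<in> sets M01"
    using sub by (subst sets_restrict_space_iff) auto
  then have "(AE s in M01. s \<notin> {a<..<b}) = (emeasure M01 {a<..<b} = 0)"
    by (rule AE_iff_measurable) (use sub in auto)
  with ae have "emeasure M01 {a<..<b} = 0" by simp
  moreover have "emeasure M01 {a<..<b} = ennreal (b - a)"
    using sub emeasure_lborel_box_eq[of a b] assms by (simp add: emeasure_restrict_space box_real)
  ultimately show False using assms by simp
qed

definition multiplier_fun :: "(nat \<Rightarrow>\<^sub>C real) \<Rightarrow> (real \<Rightarrow> real) \<Rightarrow> real \<Rightarrow> real" where
  "multiplier_fun c f s = c (block_index s) * fourier_coeff (block_index s) f"

lemma multiplier_fun_Linf_fun: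
  assumes f: "f \<in> Linf_fun"
  shows "multiplier_fun c f \<in> Linf_fun"
proof (rule Linf_funI)
  have "(\<lambda>s. (\<lambda>p (_::real). c p * fourier_coeff p f) (block_index s) s) \<in> borel_measurable M01"
    by (rule measurable_compose_countable[OF _ block_index_measurable]) simp
  then show "multiplier_fun c f \<in> borel_measurable M01"
    unfolding multiplier_fun_def by simp
  show "\<bar>multiplier_fun c f s\<bar> \<le> norm c * Linf_norm f" for s
    unfolding multiplier_fun_def abs_mult
    using norm_bounded[of c] by (intro mult_mono abs_fourier_coeff_le f) auto
qed

lemma multiplier_fun_add:
  "f \<in> Linf_fun \<Longrightarrow> g \<in> Linf_fun \<Longrightarrow>
    multiplier_fun c (\<lambda>s. f s + g s) = (\<lambda>s. multiplier_fun c f s + multiplier_fun c g s)"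
  by (simp add: multiplier_fun_def fourier_coeff_add distrib_left fun_eq_iff)

lemma multiplier_fun_scale: "multiplier_fun c (\<lambda>s. a * f s) = (\<lambda>s. a * multiplier_fun c f s)"
  by (simp add: multiplier_fun_def fourier_coeff_scale fun_eq_iff)

lemma multiplier_fun_plus_coeff:
  "multiplier_fun (c + d) f = (\<lambda>s. multiplier_fun c f s + multiplier_fun d f s)"
  by (simp add: multiplier_fun_def distrib_right fun_eq_iff)

lemma multiplier_fun_scaleR_coeff: "multiplier_fun (a *\<^sub>R c) f = (\<lambda>s. a * multiplier_fun c f s)"
  by (simp add: multiplier_fun_def fun_eq_iff)

lift_definition multiplier :: "(nat \<Rightarrow>\<^sub>C real) \<Rightarrow> Linf01 \<Rightarrow> Linf01" is multiplier_fun
proof -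
  fix c f g assume fg: "Linf_rel f g"
  then have "multiplier_fun c f = multiplier_fun c g"
    unfolding multiplier_fun_def by (auto simp: fourier_coeff_cong)
  with fg show "Linf_rel (multiplier_fun c f) (multiplier_fun c g)"
    unfolding Linf_rel_def by (auto intro: multiplier_fun_Linf_fun)
qed

lemma norm_multiplier_le:
  fixes c :: "nat \<Rightarrow>\<^sub>C real"
  assumes "\<And>p. \<bar>c p * fourier_coeffL p x\<bar> \<le> b"
  shows "norm (multiplier c x) \<le> b"
  using assms
proof transfer
  fix c f b assume "Linf_rel f f" and "\<And>p. \<bar>apply_bcontfun c p * fourier_coeff p f\<bar> \<le> b"
  then show "Linf_norm (multiplier_fun c f) \<le> b"
    by (intro Linf_norm_le multiplier_fun_Linf_fun) (auto simp: Linf_rel_def multiplier_fun_def)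
qed

text \<open>On the interval \<open>]1/(p+1), 1/p[\<close>, of positive measure, \<open>multiplier c x\<close> is the
  constant \<open>c p * fourier_coeffL p x\<close>.\<close>

lemma norm_multiplier_ge:
  fixes c :: "nat \<Rightarrow>\<^sub>C real"
  assumes p: "1 \<le> p"
  shows "\<bar>c p * fourier_coeffL p x\<bar> \<le> norm (multiplier c x)"
  using assms
proof transfer
  fix c f and p :: nat assume "Linf_rel f f" and p: "1 \<le> p"
  then have f: "f \<in> Linf_fun" unfolding Linf_rel_def by auto
  show "\<bar>apply_bcontfun c p * fourier_coeff p f\<bar> \<le> Linf_norm (multiplier_fun c f)"
  proof (rule ccontr)
    assume "\<not> ?thesis"
    then have "AE s in M01. s \<notin> {1 / (real p + 1)<..<1 / real p}"
      using esssup_Linf_bounds(3)[OF multiplier_fun_Linf_fun[OF f, of c]]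
      by (auto elim!: eventually_mono simp: multiplier_fun_def block_index_eq[OF p])
    moreover have "\<not> (AE s in M01. s \<notin> {1 / (real p + 1)<..<1 / real p})"
      using p by (intro not_AE_M01_notin_interval) (auto simp: field_simps)
    ultimately show False by blast
  qed
qed

lemma norm_multiplier_bound: "norm (multiplier c x) \<le> norm c * norm x"
proof (rule norm_multiplier_le)
  fix p
  have "\<bar>c p\<bar> \<le> norm c" using norm_bounded[of c p] by simp
  then show "\<bar>c p * fourier_coeffL p x\<bar> \<le> norm c * norm x"
    unfolding abs_mult by (intro mult_mono abs_fourier_coeffL_le) auto
qed

lemma bounded_linear_multiplier: "bounded_linear (multiplier c)"
proof (rule bounded_linear_intro)
  show "multiplier c (x + y) = multiplier c x + multiplier c y" for x y
    by transfer (simp add: Linf_rel_def multiplier_fun_add add_Linf_fun multiplier_fun_Linf_fun)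
  show "multiplier c (a *\<^sub>R x) = a *\<^sub>R multiplier c x" for a x
    by transfer (simp add: Linf_rel_def multiplier_fun_scale scale_Linf_fun multiplier_fun_Linf_fun)
  show "norm (multiplier c x) \<le> norm x * norm c" for x
    using norm_multiplier_bound[of c x] by (simp add: mult.commute)
qed

definition multiplier_op :: "(nat \<Rightarrow>\<^sub>C real) \<Rightarrow> Linf01 \<Rightarrow>\<^sub>L Linf01" where
  "multiplier_op c = Blinfun (multiplier c)"

lemma blinfun_apply_multiplier_op [simp]: "blinfun_apply (multiplier_op c) = multiplier c"
  unfolding multiplier_op_def by (rule bounded_linear_Blinfun_apply[OF bounded_linear_multiplier])

lemma bounded_linear_multiplier_op: "bounded_linear multiplier_op"
proof (rule bounded_linear_intro)
  show "multiplier_op (c + d) = multiplier_op c + multiplier_op d" for c d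
    by (rule blinfun_eqI, simp add: plus_blinfun.rep_eq, transfer)
       (simp add: Linf_rel_def multiplier_fun_plus_coeff add_Linf_fun multiplier_fun_Linf_fun)
  show "multiplier_op (a *\<^sub>R c) = a *\<^sub>R multiplier_op c" for a c
    by (rule blinfun_eqI, simp add: scaleR_blinfun.rep_eq, transfer)
       (simp add: Linf_rel_def multiplier_fun_scaleR_coeff scale_Linf_fun multiplier_fun_Linf_fun)
  show "norm (multiplier_op c) \<le> norm c * 1" for c
    by (simp add: norm_blinfun_bound norm_multiplier_bound)
qed

lemma multiplier_diff_coeff: "multiplier (c - d) x = multiplier c x - multiplier d x"
proof -
  have "multiplier_op (c - d) = multiplier_op c - multiplier_op d"
    by (rule linear_diff[OF bounded_linear.linear[OF bounded_linear_multiplier_op]])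
  from arg_cong[OF this, of "\<lambda>T. blinfun_apply T x"] show ?thesis by (simp add: minus_blinfun.rep_eq)
qed


section \<open>Closed subspaces of finite codimension\<close>

lemma abs_scale_infdist_le:
  fixes f :: "'a::real_normed_vector"
  assumes Y: "subspace Y" and y: "y \<in> Y"
  shows "\<bar>k\<bar> * infdist f Y \<le> norm (y + k *\<^sub>R f)"
proof (cases "k = 0")
  case False
  have "- (1/k) *\<^sub>R y \<in> Y" using Y y by (simp add: subspace_scale subspace_neg)
  then have "infdist f Y \<le> norm (f + (1/k) *\<^sub>R y)"
    using infdist_le[of "- (1/k) *\<^sub>R y" Y f] by (simp add: dist_norm)
  then have "\<bar>k\<bar> * infdist f Y \<le> norm (k *\<^sub>R (f + (1/k) *\<^sub>R y))"
    by (simp add: mult_left_mono)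
  also have "k *\<^sub>R (f + (1/k) *\<^sub>R y) = y + k *\<^sub>R f" using False by (simp add: algebra_simps)
  finally show ?thesis .
qed simp

lemma span_insert_subspace: "subspace Y \<Longrightarrow> span (insert f Y) = {z. \<exists>k. z - k *\<^sub>R f \<in> Y}"
  by (simp add: span_insert span_eq_iff[THEN iffD2])

lemma closed_span_insert:
  fixes Y :: "'a::real_normed_vector set"
  assumes Y: "subspace Y" "closed Y"
  shows "closed (span (insert f Y))"
proof (cases "f \<in> Y")
  case True
  then show ?thesis using Y by (simp add: insert_absorb span_eq_iff[THEN iffD2])
next
  case False
  define d where "d = infdist f Y"
  have d: "d > 0" unfolding d_def
    using False Y subspace_0 by (intro infdist_pos_not_in_closed) auto
  show ?thesis unfolding span_insert_subspace[OF Y(1)] closed_sequential_limits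
  proof (intro allI impI, elim conjE)
    fix z l assume "\<forall>n. z n \<in> {z. \<exists>k. z - k *\<^sub>R f \<in> Y}" and lim: "z \<longlonglongrightarrow> l"
    then obtain c where c: "\<And>n. z n - c n *\<^sub>R f \<in> Y" by simp metis
    have cd: "\<bar>c n - c m\<bar> * d \<le> norm (z n - z m)" for n m
      using abs_scale_infdist_le[OF Y(1) subspace_diff[OF Y(1) c[of n] c[of m]], of "c n - c m" f]
      by (simp add: d_def algebra_simps)
    have "Cauchy c"
    proof (rule metric_CauchyI)
      fix e :: real assume "e > 0"
      then obtain M where M: "\<And>m n. m \<ge> M \<Longrightarrow> n \<ge> M \<Longrightarrow> dist (z m) (z n) < e * d"
        using d LIMSEQ_imp_Cauchy[OF lim] by (meson metric_CauchyD mult_pos_pos)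
      have "dist (c m) (c n) < e" if "m \<ge> M" "n \<ge> M" for m n
      proof -
        have "\<bar>c m - c n\<bar> * d < e * d" using cd[of m n] M[OF that] by (simp add: dist_norm)
        then show ?thesis using d by (simp add: dist_real_def)
      qed
      then show "\<exists>M. \<forall>m\<ge>M. \<forall>n\<ge>M. dist (c m) (c n) < e" by blast
    qed
    then obtain k where "c \<longlonglongrightarrow> k" using Cauchy_convergent_iff convergent_def by blast
    then have "(\<lambda>n. z n - c n *\<^sub>R f) \<longlonglongrightarrow> l - k *\<^sub>R f"
      by (intro tendsto_intros lim)
    then have "l - k *\<^sub>R f \<in> Y" by (rule closed_sequentially[OF Y(2) c])
    then show "l \<in> {z. \<exists>k. z - k *\<^sub>R f \<in> Y}" by blast
  qed
qed

text \<open>The coordinate along \<open>f\<close> of a vector of \<open>span (insert f Y)\<close> is bounded by its norm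
  divided by \<open>infdist f Y\<close>, hence continuous when \<open>Y\<close> is closed.\<close>

lemma bounded_linear_coordinate:
  fixes Y :: "'a::real_normed_vector set"
  assumes Y: "subspace Y" "closed Y" and f: "f \<notin> Y"
    and g: "bounded_linear g" and g_span: "\<And>x. g x \<in> span (insert f Y)"
  shows "\<exists>\<psi>. bounded_linear \<psi> \<and> (\<forall>x. g x - \<psi> x *\<^sub>R f \<in> Y)"
proof -
  define d where "d = infdist f Y"
  have d: "d > 0" unfolding d_def
    using f Y subspace_0 by (intro infdist_pos_not_in_closed) auto
  have unique: "k = k'" if "z - k *\<^sub>R f \<in> Y" "z - k' *\<^sub>R f \<in> Y" for z k k'
  proof (rule ccontr)
    assume "k \<noteq> k'"
    have "(k' - k) *\<^sub>R f \<in> Y"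
      using subspace_diff[OF Y(1) that] by (simp add: algebra_simps)
    then have "(1 / (k' - k)) *\<^sub>R ((k' - k) *\<^sub>R f) \<in> Y" by (rule subspace_scale[OF Y(1)])
    with \<open>k \<noteq> k'\<close> f show False by simp
  qed
  define \<psi> where "\<psi> x = (THE k. g x - k *\<^sub>R f \<in> Y)" for x
  have \<psi>_eqI: "\<psi> x = k" if "g x - k *\<^sub>R f \<in> Y" for x k
    unfolding \<psi>_def using that unique by (intro the_equality) auto
  have \<psi>: "g x - \<psi> x *\<^sub>R f \<in> Y" for x
  proof -
    obtain k where "g x - k *\<^sub>R f \<in> Y" using g_span[of x] span_insert_subspace[OF Y(1)] by auto
    then show ?thesis using \<psi>_eqI by simp
  qed
  obtain K where K: "\<And>x. norm (g x) \<le> norm x * K" using bounded_linear.bounded[OF g] by blast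
  have "bounded_linear \<psi>"
  proof (rule bounded_linear_intro[where K = "\<bar>K\<bar> / d"])
    show "\<psi> (x + y) = \<psi> x + \<psi> y" for x y
      using subspace_add[OF Y(1) \<psi>[of x] \<psi>[of y]]
      by (intro \<psi>_eqI) (simp add: linear_add[OF bounded_linear.linear[OF g]] algebra_simps)
    show "\<psi> (a *\<^sub>R x) = a *\<^sub>R \<psi> x" for a x
      using subspace_scale[OF Y(1) \<psi>[of x], of a]
      by (intro \<psi>_eqI) (simp add: linear_scale[OF bounded_linear.linear[OF g]] algebra_simps)
    show "norm (\<psi> x) \<le> norm x * (\<bar>K\<bar> / d)" for x
    proof -
      have "\<bar>\<psi> x\<bar> * d \<le> norm (g x)"
        using abs_scale_infdist_le[OF Y(1) \<psi>[of x], of "\<psi> x" f] by (simp add: d_def)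
      also have "\<dots> \<le> norm x * \<bar>K\<bar>" using K[of x] by (meson abs_ge_self mult_left_mono norm_ge_zero order_trans)
      finally show ?thesis using d by (simp add: field_simps)
    qed
  qed
  with \<psi> show ?thesis by blast
qed

definition lincomb :: "(('a::real_normed_vector \<Rightarrow> real) \<times> 'a) list \<Rightarrow> 'a \<Rightarrow> 'a" where
  "lincomb ps x = (\<Sum>q\<leftarrow>ps. fst q x *\<^sub>R snd q)"

lemma lincomb_Nil [simp]: "lincomb [] x = 0"
  by (simp add: lincomb_def)

lemma lincomb_Cons [simp]: "lincomb (q # ps) x = fst q x *\<^sub>R snd q + lincomb ps x"
  by (simp add: lincomb_def)

lemma bounded_linear_lincomb:
  "(\<And>q. q \<in> set ps \<Longrightarrow> bounded_linear (fst q)) \<Longrightarrow> bounded_linear (lincomb ps)"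
proof (induction ps)
  case Nil
  then show ?case using bounded_linear_zero by (simp add: lincomb_def)
next
  case (Cons q ps)
  have "bounded_linear (\<lambda>x. fst q x *\<^sub>R snd q + lincomb ps x)"
    using Cons by (intro bounded_linear_add bounded_linear_scaleR_left[THEN bounded_linear_compose]) auto
  then show ?case by simp
qed

lemma norm_lincomb_le:
  "(\<And>q. q \<in> set ps \<Longrightarrow> \<bar>fst q x\<bar> \<le> e) \<Longrightarrow>
    norm (lincomb ps x) \<le> e * (\<Sum>q\<leftarrow>ps. norm (snd q))"
proof (induction ps)
  case (Cons q ps)
  have "norm (lincomb (q # ps) x) \<le> \<bar>fst q x\<bar> * norm (snd q) + norm (lincomb ps x)"
    using norm_triangle_ineq[of "fst q x *\<^sub>R snd q"] by simp
  also have "\<dots> \<le> e * norm (snd q) + e * (\<Sum>q\<leftarrow>ps. norm (snd q))"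
    using Cons by (intro add_mono mult_right_mono) auto
  finally show ?case by (simp add: algebra_simps)
qed simp

lemma finite_codim_projection:
  fixes Y :: "'a::real_normed_vector set"
  assumes "finite F" "subspace Y" "closed Y" "span (Y \<union> F) = UNIV"
  shows "\<exists>ps. (\<forall>q\<in>set ps. bounded_linear (fst q)) \<and> (\<forall>x. x - lincomb ps x \<in> Y)"
  using assms
proof (induction F arbitrary: Y rule: finite_induct)
  case empty
  then have "Y = UNIV" by (simp add: span_eq_iff[THEN iffD2])
  then show ?case by (intro exI[of _ "[]"]) simp
next
  case (insert f F Y)
  define Y' where "Y' = span (insert f Y)"
  have "span (Y \<union> insert f F) \<subseteq> span (Y' \<union> F)"
    unfolding Y'_def by (intro span_mono) (auto intro: span_base)
  then have "span (Y' \<union> F) = UNIV" using insert.prems(3) by auto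
  moreover have "subspace Y'" "closed Y'"
    unfolding Y'_def using insert.prems(1,2) by (auto intro: closed_span_insert)
  ultimately obtain ps' where ps': "\<forall>q\<in>set ps'. bounded_linear (fst q)" "\<And>x. x - lincomb ps' x \<in> Y'"
    using insert.IH by blast
  show ?case
  proof (cases "f \<in> Y")
    case True
    then have "Y' = Y" unfolding Y'_def using insert.prems by (simp add: insert_absorb span_eq_iff[THEN iffD2])
    then show ?thesis using ps' by blast
  next
    case False
    have "bounded_linear (\<lambda>x. x - lincomb ps' x)"
      using ps'(1) by (intro bounded_linear_sub bounded_linear_ident bounded_linear_lincomb) auto
    then obtain \<psi> where \<psi>: "bounded_linear \<psi>" "\<And>x. (x - lincomb ps' x) - \<psi> x *\<^sub>R f \<in> Y"
      using bounded_linear_coordinate[OF insert.prems(1,2) False, of "\<lambda>x. x - lincomb ps' x"] ps'(2)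
      unfolding Y'_def by blast
    then show ?thesis using ps'(1)
      by (intro exI[of _ "(\<psi>, f) # ps'"]) (auto simp: algebra_simps)
  qed
qed

lemma abs_diff_less_if_floor_divide_eq:
  fixes a b \<eta> :: real
  assumes \<eta>: "\<eta> > 0" and eq: "\<lfloor>a / \<eta>\<rfloor> = \<lfloor>b / \<eta>\<rfloor>"
  shows "\<bar>a - b\<bar> < \<eta>"
proof -
  have "\<bar>a / \<eta> - b / \<eta>\<bar> < 1"
    using eq of_int_floor_le[of "a / \<eta>"] of_int_floor_le[of "b / \<eta>"]
      real_of_int_floor_add_one_gt[of "a / \<eta>"] real_of_int_floor_add_one_gt[of "b / \<eta>"]
    by linarith
  then show ?thesis using \<eta> by (simp add: diff_divide_distrib[symmetric] abs_divide)
qed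

lemma bounded_sequences_close_pair:
  fixes a :: "'i \<Rightarrow> nat \<Rightarrow> real"
  assumes I: "finite I" and bound: "\<And>i k. i \<in> I \<Longrightarrow> \<bar>a i k\<bar> \<le> b i" and \<eta>: "\<eta> > 0"
  shows "\<exists>k l. k \<noteq> l \<and> (\<forall>i\<in>I. \<bar>a i k - a i l\<bar> < \<eta>)"
proof -
  define code where "code k = restrict (\<lambda>i. \<lfloor>a i k / \<eta>\<rfloor>) I" for k
  have "range code \<subseteq> PiE I (\<lambda>i. {- \<lceil>b i / \<eta>\<rceil>..\<lceil>b i / \<eta>\<rceil>})"
  proof (clarsimp simp: code_def)
    fix k i assume "i \<in> I"
    then have "- b i \<le> a i k" "a i k \<le> b i" using bound[of i k] by auto
    then have "- (b i / \<eta>) \<le> a i k / \<eta>" "a i k / \<eta> \<le> b i / \<eta>"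
      using \<eta> divide_right_mono[of "- b i" "a i k" \<eta>] by (auto intro: divide_right_mono)
    then have "\<lfloor>- (b i / \<eta>)\<rfloor> \<le> \<lfloor>a i k / \<eta>\<rfloor>" "\<lfloor>a i k / \<eta>\<rfloor> \<le> \<lceil>b i / \<eta>\<rceil>"
      by (auto intro: floor_mono order_trans[OF floor_mono floor_le_ceiling])
    then show "- \<lceil>b i / \<eta>\<rceil> \<le> \<lfloor>a i k / \<eta>\<rfloor> \<and> \<lfloor>a i k / \<eta>\<rfloor> \<le> \<lceil>b i / \<eta>\<rceil>"
      by (simp add: ceiling_def)
  qed
  then have "finite (range code)" by (rule finite_subset) (simp add: finite_PiE I)
  then have "\<not> inj code" using finite_imageD infinite_UNIV_nat by blast
  then obtain k l where "k \<noteq> l" "code k = code l" unfolding inj_def by blast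
  then have "\<lfloor>a i k / \<eta>\<rfloor> = \<lfloor>a i l / \<eta>\<rfloor>" if "i \<in> I" for i
    using that by (metis code_def restrict_apply')
  then have "\<forall>i\<in>I. \<bar>a i k - a i l\<bar> < \<eta>"
    using abs_diff_less_if_floor_divide_eq[OF \<eta>] by blast
  with \<open>k \<noteq> l\<close> show ?thesis by blast
qed

lemma closed_finite_codim_subspace_close_difference:
  fixes Y :: "'a::real_normed_vector set" and t :: "nat \<Rightarrow> 'a"
  assumes Y: "closed_finite_codim_subspace Y" and t: "\<And>k. norm (t k) \<le> b" and \<eta>: "\<eta> > 0"
  shows "\<exists>k l. k \<noteq> l \<and> (\<exists>y\<in>Y. norm (t k - t l - y) \<le> \<eta>)"
proof -
  obtain ps where ps: "\<forall>q\<in>set ps. bounded_linear (fst q)" "\<And>x. x - lincomb ps x \<in> Y"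
    using Y finite_codim_projection unfolding closed_finite_codim_subspace_def by metis
  define S where "S = (\<Sum>q\<leftarrow>ps. norm (snd q))"
  have "S \<ge> 0" unfolding S_def by (induction ps) auto
  define e where "e = \<eta> / (1 + S)"
  have e: "e > 0" "e * S \<le> \<eta>" unfolding e_def using \<eta> \<open>S \<ge> 0\<close> by (auto simp: field_simps)
  have bound: "\<bar>\<phi> (t k)\<bar> \<le> onorm \<phi> * b" if "\<phi> \<in> fst ` set ps" for \<phi> k
  proof -
    have bl: "bounded_linear \<phi>" using ps(1) that by auto
    have "\<bar>\<phi> (t k)\<bar> \<le> onorm \<phi> * norm (t k)" using onorm[OF bl, of "t k"] by simp
    also have "\<dots> \<le> onorm \<phi> * b" using t onorm_pos_le[OF bl] by (intro mult_left_mono) auto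
    finally show ?thesis .
  qed
  then obtain k l where "k \<noteq> l" and kl: "\<forall>\<phi>\<in>fst ` set ps. \<bar>\<phi> (t k) - \<phi> (t l)\<bar> < e"
    using bounded_sequences_close_pair[of "fst ` set ps" "\<lambda>\<phi> k. \<phi> (t k)" "\<lambda>\<phi>. onorm \<phi> * b" e]
      bound e(1) by blast
  define x where "x = t k - t l"
  have "\<bar>fst q x\<bar> \<le> e" if q: "q \<in> set ps" for q
  proof -
    have "fst q x = fst q (t k) - fst q (t l)"
      unfolding x_def using ps(1) q by (simp add: linear_diff bounded_linear.linear)
    then show ?thesis using kl q by fastforce
  qed
  then have "norm (x - (x - lincomb ps x)) \<le> \<eta>"
    using norm_lincomb_le[of ps x e] e(2) unfolding S_def by simp
  then show ?thesis using \<open>k \<noteq> l\<close> ps(2)[of x] unfolding x_def by blast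
qed

section \<open>Failure of UALS\<close>

lemma card_classes_with_large_coefficient:
  fixes \<phi> :: "nat \<Rightarrow> real" and g :: "nat \<Rightarrow> 'i"
  assumes Bessel: "\<And>P. finite P \<Longrightarrow> (\<Sum>p\<in>P. (\<phi> p)\<^sup>2) \<le> B" and \<delta>: "\<delta> > 0" and I: "finite I"
  shows "real (card {i\<in>I. \<exists>p. g p = i \<and> \<delta> < \<bar>\<phi> p\<bar>}) * \<delta>\<^sup>2 \<le> B"
proof -
  define S where "S = {i\<in>I. \<exists>p. g p = i \<and> \<delta> < \<bar>\<phi> p\<bar>}"
  define pick where "pick i = (SOME p. g p = i \<and> \<delta> < \<bar>\<phi> p\<bar>)" for i
  have pick: "g (pick i) = i \<and> \<delta> < \<bar>\<phi> (pick i)\<bar>" if "i \<in> S" for i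
  proof -
    have "\<exists>p. g p = i \<and> \<delta> < \<bar>\<phi> p\<bar>" using that by (simp add: S_def)
    then show ?thesis unfolding pick_def by (rule someI_ex)
  qed
  then have "inj_on pick S" by (metis inj_onI)
  have "real (card S) * \<delta>\<^sup>2 = (\<Sum>i\<in>S. \<delta>\<^sup>2)" by simp
  also have "\<dots> \<le> (\<Sum>i\<in>S. (\<phi> (pick i))\<^sup>2)"
    using pick \<delta> by (intro sum_mono) (simp add: abs_le_square_iff[symmetric] less_imp_le)
  also have "\<dots> = (\<Sum>p\<in>pick ` S. (\<phi> p)\<^sup>2)" by (simp add: sum.reindex[OF \<open>inj_on pick S\<close>])
  also have "\<dots> \<le> B" using I by (intro Bessel) (simp add: S_def)
  finally show ?thesis unfolding S_def .
qed

definition residue_indicator :: "nat \<Rightarrow> real \<Rightarrow> nat \<Rightarrow> (nat \<Rightarrow>\<^sub>C real)" where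
  "residue_indicator n a j = Bcontfun (\<lambda>p. if p mod n = j then a else 0)"

lemma apply_residue_indicator [simp]: "residue_indicator n a j p = (if p mod n = j then a else 0)"
  unfolding residue_indicator_def
  by (subst Bcontfun_inverse) (auto intro: bcontfun_normI[where b = "\<bar>a\<bar>"])

lemma apply_bcontfun_sum: "apply_bcontfun (\<Sum>j\<in>J. c j) p = (\<Sum>j\<in>J. apply_bcontfun (c j) p)"
  by (induction J rule: infinite_finite_induct) auto

lemma convex_hull_residue_indicators:
  assumes c: "c \<in> convex hull (residue_indicator n a ` {..<n})"
  shows "(\<forall>p. c p = c (p mod n)) \<and> (\<Sum>i<n. c i) = a"
proof -
  define Q where "Q = {c :: nat \<Rightarrow>\<^sub>C real. (\<forall>p. c p = c (p mod n)) \<and> (\<Sum>i<n. c i) = a}"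
  have "(\<Sum>i<n. residue_indicator n a j i) = a" if "j < n" for j
  proof -
    have "(\<Sum>i<n. residue_indicator n a j i) = (\<Sum>i<n. if i = j then a else 0)"
      by (intro sum.cong) auto
    then show ?thesis using that by simp
  qed
  then have "residue_indicator n a ` {..<n} \<subseteq> Q" by (auto simp: Q_def)
  moreover have "convex Q"
  proof (rule convexI)
    fix c d :: "nat \<Rightarrow>\<^sub>C real" and u v :: real
    assume "c \<in> Q" "d \<in> Q" "u + v = 1"
    then show "u *\<^sub>R c + v *\<^sub>R d \<in> Q"
      by (simp add: Q_def sum.distrib flip: sum_distrib_left distrib_right)
  qed
  ultimately have "convex hull (residue_indicator n a ` {..<n}) \<subseteq> Q" by (rule hull_minimal)
  with c show ?thesis unfolding Q_def by blast
qed

lemma residue_indicator_approximation: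
  fixes x :: Linf01
  assumes x: "norm x \<le> 1" and K: "K > 0" and M: "K\<^sup>2 \<le> 2 * real M" "0 < M" "M \<le> n"
  shows "\<exists>B \<in> multiplier_op ` (convex hull (residue_indicator n (K * M) ` {..<n})).
    norm (blinfun_apply (multiplier_op (const_bcontfun K)) x - blinfun_apply B x) \<le> 1"
proof -
  define S where "S = {i\<in>{..<n}. \<exists>p. p mod n = i \<and> 1 / K < \<bar>fourier_coeffL p x\<bar>}"
  have "real (card S) * (1 / K)\<^sup>2 \<le> 1 / 2"
    unfolding S_def using K x fourier_coeffL_Bessel[of _ x] power_le_one[of "norm x" 2]
    by (intro card_classes_with_large_coefficient) (auto intro: order_trans)
  then have "card S \<le> M" using K M by (simp add: field_simps power2_eq_square)
  moreover have "S \<subseteq> {..<n}" "M \<le> card {..<n}" using M unfolding S_def by auto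
  ultimately obtain T where T: "S \<subseteq> T" "T \<subseteq> {..<n}" "card T = M"
    using exists_subset_between[of S M "{..<n}"] by auto
  then have "finite T" using finite_subset by blast
  define c where "c = (\<Sum>j\<in>T. (1 / M) *\<^sub>R residue_indicator n (K * M) j)"
  have "c \<in> convex hull (residue_indicator n (K * M) ` {..<n})"
    unfolding c_def using T M \<open>finite T\<close>
    by (intro convex_sum convex_convex_hull hull_inc) auto
  moreover have c_eq: "c p = (if p mod n \<in> T then K else 0)" for p
    using M \<open>finite T\<close> by (simp add: c_def apply_bcontfun_sum if_distrib[of "(*) _"] sum.delta cong: if_cong)
  have "norm (multiplier (const_bcontfun K - c) x) \<le> 1"
  proof (rule norm_multiplier_le)
    fix p
    have "\<bar>fourier_coeffL p x\<bar> \<le> 1 / K" if "p mod n \<notin> T"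
    proof -
      have "p mod n \<notin> S" "p mod n < n" using that T(1) M by auto
      then show ?thesis unfolding S_def by (auto simp: not_less)
    qed
    then show "\<bar>(const_bcontfun K - c) p * fourier_coeffL p x\<bar> \<le> 1"
      using K by (auto simp: c_eq abs_mult field_simps)
  qed
  ultimately show ?thesis by (intro bexI[of _ "multiplier_op c"] imageI) (simp_all add: multiplier_diff_coeff)
qed

lemma exists_le_average:
  fixes f :: "'a \<Rightarrow> real"
  assumes "finite A" "A \<noteq> {}"
  shows "\<exists>i\<in>A. f i \<le> sum f A / card A"
proof (rule ccontr)
  assume "\<not> ?thesis"
  then have "(\<Sum>i\<in>A. sum f A / card A) < sum f A"
    using assms by (intro sum_strict_mono) (auto simp: not_le)
  then show False using assms by simp
qed

lemma infinite_residue_class: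
  fixes i n :: nat
  assumes "i < n"
  shows "infinite {p. p mod n = i \<and> 0 < p}"
  unfolding infinite_nat_iff_unbounded_le
proof
  fix m
  have "m \<le> (m + 1) * n" using assms by (cases n) auto
  moreover have "((m + 1) * n + i) mod n = i" using assms by (metis mod_less mod_mult_self3)
  ultimately have "((m + 1) * n + i) mod n = i" "m \<le> (m + 1) * n + i" "0 < (m + 1) * n + i"
    using assms by auto
  then show "\<exists>p\<ge>m. p \<in> {p. p mod n = i \<and> 0 < p}" by blast
qed

lemma residue_class_with_small_weight:
  assumes c: "c \<in> convex hull (residue_indicator n a ` {..<n})" and n: "0 < n"
  obtains i where "i < n" "\<And>p. p mod n = i \<Longrightarrow> c p \<le> a / n"
proof -
  have "\<forall>p. c p = c (p mod n)" "(\<Sum>i<n. c i) = a"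
    using convex_hull_residue_indicators[OF c] by blast+
  moreover obtain i where "i < n" "c i \<le> a / n"
    using exists_le_average[of "{..<n}" c] n calculation(2) by auto
  ultimately show thesis using that by metis
qed

text \<open>The test vector: \<open>Y\<close> contains, up to \<open>1/4\<close>, a difference of two cosine modes with
  frequencies in \<open>P\<close>.\<close>

lemma multiplier_bound_on_finite_codim_ge:
  fixes d :: "nat \<Rightarrow>\<^sub>C real"
  assumes Y: "closed_finite_codim_subspace Y"
    and bound: "\<And>y. y \<in> Y \<Longrightarrow> norm (multiplier d y) \<le> C * norm y"
    and P: "infinite P" "0 \<notin> P" and large: "\<And>p. p \<in> P \<Longrightarrow> \<delta> \<le> \<bar>d p\<bar>"
  shows "\<delta> \<le> 9 * C"
proof -
  define t where "t k = cos_modeL (enumerate P k)" for k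
  obtain k l y where "k \<noteq> l" "y \<in> Y" and y: "norm (t k - t l - y) \<le> 1/4"
    using closed_finite_codim_subspace_close_difference[OF Y, of t 1 "1/4"] norm_cos_modeL_le
    by (auto simp: t_def)
  define p where "p = enumerate P k"
  have "p \<in> P" "enumerate P l \<noteq> p"
    using enumerate_in_set[OF P(1)] inj_enumerate[OF P(1)] \<open>k \<noteq> l\<close> by (auto simp: p_def inj_eq)
  have "fourier_coeffL p y = fourier_coeffL p ((t k - t l) - (t k - t l - y))" by simp
  also have "\<dots> = fourier_coeffL p (t k) - fourier_coeffL p (t l) - fourier_coeffL p (t k - t l - y)"
    by (simp only: linear_diff[OF linear_fourier_coeffL])
  also have "\<dots> = 1/2 - fourier_coeffL p (t k - t l - y)"
    using \<open>enumerate P l \<noteq> p\<close> by (simp add: t_def p_def fourier_coeffL_cos_modeL)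
  finally have coeff: "1/4 \<le> fourier_coeffL p y"
    using abs_fourier_coeffL_le[of p "t k - t l - y"] y by simp
  have "norm y \<le> norm (t k) + norm (t l) + norm (t k - t l - y)"
    using norm_triangle_ineq4[of "t k - t l" "t k - t l - y"] norm_triangle_ineq4[of "t k" "t l"] by simp
  then have "norm y \<le> 9/4" using y norm_cos_modeL_le[of "enumerate P k"] norm_cos_modeL_le[of "enumerate P l"]
    unfolding t_def by linarith
  have "\<delta> * (1/4) \<le> \<bar>d p * fourier_coeffL p y\<bar>"
    using large[OF \<open>p \<in> P\<close>] coeff unfolding abs_mult
    by (intro order_trans[OF mult_right_mono mult_left_mono]) auto
  also have "\<dots> \<le> norm (multiplier d y)"
    using \<open>p \<in> P\<close> P(2) by (intro norm_multiplier_ge) (cases p; auto)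
  also have "\<dots> \<le> C * norm y" by (rule bound[OF \<open>y \<in> Y\<close>])
  finally have "\<delta> * (1/4) \<le> C * norm y" .
  moreover have "0 \<le> C"
  proof -
    have "0 < norm y" using coeff abs_fourier_coeffL_le[of p y] by linarith
    moreover have "0 \<le> C * norm y" using bound[OF \<open>y \<in> Y\<close>] norm_ge_zero order_trans by blast
    ultimately show ?thesis by (simp add: zero_le_mult_iff)
  qed
  then have "C * norm y \<le> C * (9/4)" using mult_left_mono[OF \<open>norm y \<le> 9/4\<close>] by blast
  ultimately show ?thesis by linarith
qed

lemma residue_indicator_hull_bound_on_finite_codim:
  fixes n M :: nat and K :: real
  assumes c: "c \<in> convex hull (residue_indicator n (K * M) ` {..<n})" and n: "n = 2 * M" "0 < M"
    and Y: "closed_finite_codim_subspace Y"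
    and bound: "\<And>y. y \<in> Y \<Longrightarrow> norm (multiplier (const_bcontfun K - c) y) \<le> C * norm y"
  shows "K / 2 \<le> 9 * C"
proof -
  obtain i where "i < n" and small: "\<And>p. p mod n = i \<Longrightarrow> c p \<le> K / 2"
    using residue_class_with_small_weight[OF c] n by (auto simp: field_simps)
  show ?thesis
  proof (rule multiplier_bound_on_finite_codim_ge[OF Y bound infinite_residue_class[OF \<open>i < n\<close>]])
    show "K / 2 \<le> \<bar>(const_bcontfun K - c) p\<bar>" if "p \<in> {p. p mod n = i \<and> 0 < p}" for p
      using small[of p] that by (simp add: abs_if)
  qed auto
qed

lemma not_UALS_with_constant:
  fixes C :: real
  assumes "C > 0"
  shows "\<not> (\<forall>(W :: (Linf01 \<Rightarrow>\<^sub>L Linf01) set) A \<epsilon>.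
      convex W \<and> compact W \<and> \<epsilon> > 0 \<and>
      (\<forall>x. norm x \<le> 1 \<longrightarrow> (\<exists>B\<in>W. norm (blinfun_apply A x - blinfun_apply B x) \<le> \<epsilon>))
      \<longrightarrow> (\<exists>Y. \<exists>B\<in>W. closed_finite_codim_subspace Y \<and>
             (\<forall>y\<in>Y. norm (blinfun_apply (A - B) y) \<le> C * \<epsilon> * norm y)))"
    (is "\<not> ?UALS")
proof
  assume ?UALS
  define K where "K = 20 * C + 20"
  define M where "M = nat \<lceil>K\<^sup>2\<rceil>"
  define n where "n = 2 * M"
  define E where "E = convex hull (residue_indicator n (K * M) ` {..<n})"
  have "K > 0" using \<open>C > 0\<close> by (simp add: K_def)
  have "K\<^sup>2 \<le> real M" unfolding M_def by (rule real_nat_ceiling_ge)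
  moreover have "0 < K\<^sup>2" using \<open>K > 0\<close> by simp
  ultimately have "K\<^sup>2 \<le> 2 * real M" "0 < M" by linarith+
  have "convex (multiplier_op ` E)" "compact (multiplier_op ` E)"
    unfolding E_def using bounded_linear_multiplier_op
    by (auto intro: convex_linear_image bounded_linear.linear compact_continuous_image
        linear_continuous_on finite_imp_compact_convex_hull)
  moreover have "\<forall>x. norm x \<le> 1 \<longrightarrow> (\<exists>B\<in>multiplier_op ` E.
      norm (blinfun_apply (multiplier_op (const_bcontfun K)) x - blinfun_apply B x) \<le> 1)"
    using residue_indicator_approximation[OF _ \<open>K > 0\<close> \<open>K\<^sup>2 \<le> 2 * real M\<close> \<open>0 < M\<close>, of _ n]
    unfolding E_def n_def by auto
  ultimately obtain Y B where Y: "closed_finite_codim_subspace Y" and "B \<in> multiplier_op ` E"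
    and bound: "\<forall>y\<in>Y. norm (blinfun_apply (multiplier_op (const_bcontfun K) - B) y) \<le> C * 1 * norm y"
    using \<open>?UALS\<close>[rule_format, of "multiplier_op ` E" 1 "multiplier_op (const_bcontfun K)"] by auto
  then obtain c where "c \<in> E" and B: "B = multiplier_op c" by blast
  have "norm (multiplier (const_bcontfun K - c) y) \<le> C * norm y" if "y \<in> Y" for y
    using bound that by (simp add: B minus_blinfun.rep_eq multiplier_diff_coeff)
  then have "K / 2 \<le> 9 * C"
    using residue_indicator_hull_bound_on_finite_codim[OF _ n_def \<open>0 < M\<close> Y] \<open>c \<in> E\<close>
    unfolding E_def by blast
  then show False using \<open>C > 0\<close> K_def by linarith
qed

theorem proposition5p39:
  shows "\<not> UALS TYPE(Linf01)"
  unfolding UALS_def using not_UALS_with_constant by blast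

end
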